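(* Let $k\ge2$, let $f:(k+1)^V\to\mathbb{R}_{\ge0}$ be non-negative, monotone and $k$-submodular with multilinear extension $F$, let $OPT=\max_{S\in(k+1)^V}f(S)$, and let $c>0$. Consider the meta-framework with step $\delta=1/N$, and suppose that at every iteration $t$ the direction $v(t)$ satisfies, with $y=\nabla F(s(t))$: for every $a\in\mathbb{R}^{n\times k}$ with $0\le a_{i,j}\le y_{i,j}$ for all $i,j$, and every map $j^*:[n]\to[k]$, $$\sum_{i\in[n]}\sum_{j\in[k]}v_{i,j}(t)\big(a_{i,j^*(i)}-a_{i,j}\big)\ \le\ c\sum_{i\in[n]}\sum_{j\in[k]}v_{i,j}(t)\,y_{i,j}.$$ Then for every $\varepsilon>0$ there is $N_0$ such that for all $N\ge N_0$ the output satisfies $F(s(N))\ge\frac{1}{c+1}OPT-\varepsilon$.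
   Context: Let $V=[n]=\{1,\dots,n\}$ and let $k\ge 1$ be an integer. Write $(k+1)^V$ for the set of $k$-tuples $S=(S_1,\dots,S_k)$ of pairwise disjoint subsets of $V$. For $S,T\in(k+1)^V$ let $S\sqcap T=(S_1\cap T_1,\dots,S_k\cap T_k)$ and let $S\sqcup T$ be the tuple whose $j$-th component is $(S_j\cup T_j)\setminus\bigcup_{l\neq j}(S_l\cup T_l)$. A function $f:(k+1)^V\to\mathbb{R}$ is $k$-submodular if $f(S)+f(T)\ge f(S\sqcap T)+f(S\sqcup T)$ for all $S,T\in(k+1)^V$. Write $S\preceq T$ if $S_j\subseteq T_j$ for all $j$; $f$ is monotone if $S\preceq T$ implies $f(S)\le f(T)$. Let $\mathcal P=\{x\in[0,1]^{n\times k}:\sum_{j=1}^k x_{i,j}\le 1\ \forall i\in[n]\}$. The multilinear extension of $f$ is the polynomial $F(x)=\sum_{S\in(k+1)^V} f(S_1,\dots,S_k)\Big(\prod_{j\in[k]}\prod_{i\in S_j}x_{i,j}\Big)\prod_{i\in V\setminus\bigcup_j S_j}\Big(1-\sum_{j=1}^k x_{i,j}\Big)$, considered on $\mathcal P$. Meta-framework: fix a positive integer $N$ and $\delta=1/N$. Set $s(0)=0\in\mathbb{R}^{n\times k}$. For $t=0,1,\dots,N-1$, choose a direction $v(t)\in[0,1]^{n\times k}$ with $\sum_{j=1}^k v_{i,j}(t)=1$ for every $i\in[n]$ (the choice may depend on $s(t)$ and on $F$), and set $s(t+1)=s(t)+\delta\,v(t)$. The output is $s(N)$. *)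

theory Defs
  imports "HOL-Analysis.Analysis"
begin

text \<open>A k-tuple (S_1,...,S_k) of pairwise disjoint subsets of V = {1..n} is represented
  as a function S :: nat => nat set with S j the j-th component for j in {1..k},
  and S j = {} for j outside {1..k}.\<close>

definition ktuples :: "nat \<Rightarrow> nat \<Rightarrow> (nat \<Rightarrow> nat set) set" where
  "ktuples n k = {S. (\<forall>j\<in>{1..k}. S j \<subseteq> {1..n}) \<and> (\<forall>j. j \<notin> {1..k} \<longrightarrow> S j = {})
      \<and> (\<forall>j\<in>{1..k}. \<forall>l\<in>{1..k}. j \<noteq> l \<longrightarrow> S j \<inter> S l = {})}"

definition kmeet :: "(nat \<Rightarrow> nat set) \<Rightarrow> (nat \<Rightarrow> nat set) \<Rightarrow> (nat \<Rightarrow> nat set)" where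
  "kmeet S T = (\<lambda>j. S j \<inter> T j)"

definition kjoin :: "nat \<Rightarrow> (nat \<Rightarrow> nat set) \<Rightarrow> (nat \<Rightarrow> nat set) \<Rightarrow> (nat \<Rightarrow> nat set)" where
  "kjoin k S T = (\<lambda>j. if j \<in> {1..k} then (S j \<union> T j) - (\<Union>l\<in>{1..k} - {j}. S l \<union> T l) else {})"

definition k_submodular :: "nat \<Rightarrow> nat \<Rightarrow> ((nat \<Rightarrow> nat set) \<Rightarrow> real) \<Rightarrow> bool" where
  "k_submodular n k f \<longleftrightarrow> (\<forall>S\<in>ktuples n k. \<forall>T\<in>ktuples n k.
      f S + f T \<ge> f (kmeet S T) + f (kjoin k S T))"

definition kpreceq :: "nat \<Rightarrow> (nat \<Rightarrow> nat set) \<Rightarrow> (nat \<Rightarrow> nat set) \<Rightarrow> bool" where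
  "kpreceq k S T \<longleftrightarrow> (\<forall>j\<in>{1..k}. S j \<subseteq> T j)"

definition k_monotone :: "nat \<Rightarrow> nat \<Rightarrow> ((nat \<Rightarrow> nat set) \<Rightarrow> real) \<Rightarrow> bool" where
  "k_monotone n k f \<longleftrightarrow> (\<forall>S\<in>ktuples n k. \<forall>T\<in>ktuples n k. kpreceq k S T \<longrightarrow> f S \<le> f T)"

text \<open>Points of R^{n x k} are functions x :: nat => nat => real, x i j for i in [n], j in [k].\<close>

definition multilinear_ext :: "nat \<Rightarrow> nat \<Rightarrow> ((nat \<Rightarrow> nat set) \<Rightarrow> real) \<Rightarrow> (nat \<Rightarrow> nat \<Rightarrow> real) \<Rightarrow> real" where
  "multilinear_ext n k f x = (\<Sum>S\<in>ktuples n k. f S * (\<Prod>j\<in>{1..k}. \<Prod>i\<in>S j. x i j)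
      * (\<Prod>i\<in>{1..n} - (\<Union>j\<in>{1..k}. S j). 1 - (\<Sum>j=1..k. x i j)))"

definition partial_ij :: "((nat \<Rightarrow> nat \<Rightarrow> real) \<Rightarrow> real) \<Rightarrow> (nat \<Rightarrow> nat \<Rightarrow> real) \<Rightarrow> nat \<Rightarrow> nat \<Rightarrow> real" where
  "partial_ij F x i j = deriv (\<lambda>h. F (x(i := (x i)(j := h)))) (x i j)"

definition OPT :: "nat \<Rightarrow> nat \<Rightarrow> ((nat \<Rightarrow> nat set) \<Rightarrow> real) \<Rightarrow> real" where
  "OPT n k f = Max (f ` ktuples n k)"

text \<open>Trajectory of the meta-framework: s(0) = 0, s(t+1) = s(t) + (1/N) v(t).\<close>
definition traj :: "nat \<Rightarrow> (nat \<Rightarrow> nat \<Rightarrow> nat \<Rightarrow> real) \<Rightarrow> nat \<Rightarrow> nat \<Rightarrow> nat \<Rightarrow> real" where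
  "traj N v t = (\<lambda>i j. \<Sum>\<tau><t. (1 / real N) * v \<tau> i j)"

definition valid_direction :: "nat \<Rightarrow> nat \<Rightarrow> (nat \<Rightarrow> nat \<Rightarrow> real) \<Rightarrow> bool" where
  "valid_direction n k w \<longleftrightarrow> (\<forall>i\<in>{1..n}. (\<forall>j\<in>{1..k}. 0 \<le> w i j \<and> w i j \<le> 1)
      \<and> (\<Sum>j=1..k. w i j) = 1)"

definition c_condition :: "nat \<Rightarrow> nat \<Rightarrow> real \<Rightarrow> (nat \<Rightarrow> nat \<Rightarrow> real) \<Rightarrow> (nat \<Rightarrow> nat \<Rightarrow> real) \<Rightarrow> bool" where
  "c_condition n k c w y \<longleftrightarrow>
    (\<forall>a :: nat \<Rightarrow> nat \<Rightarrow> real. \<forall>jstar :: nat \<Rightarrow> nat.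
      (\<forall>i\<in>{1..n}. \<forall>j\<in>{1..k}. 0 \<le> a i j \<and> a i j \<le> y i j) \<longrightarrow>
      (\<forall>i\<in>{1..n}. jstar i \<in> {1..k}) \<longrightarrow>
      (\<Sum>i=1..n. \<Sum>j=1..k. w i j * (a i (jstar i) - a i j))
        \<le> c * (\<Sum>i=1..n. \<Sum>j=1..k. w i j * y i j))"

end

theory Submission
  imports Defs
begin

text \<open>\<open>F(x)\<close> is the expectation of \<open>f\<close> when every element \<open>i\<close> independently receives label \<open>j\<close>
  with probability \<open>x i j\<close> and no label otherwise. Hence \<open>F\<close> is affine in each row \<open>x i\<close>, its
  partial derivatives are expected marginal gains, which are non-negative by monotonicity and
  antitone in \<open>x\<close> by \<open>k\<close>-submodularity, and \<open>F\<close> agrees with its first-order expansion up to an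
  error quadratic in the \<open>l\<^sub>1\<close>-distance.

  Let \<open>e\<close> be the vertex of an optimal labelling that labels every element. Along the path
  \<open>o(t) = s(t) + (1 - t/N) e\<close> from \<open>e\<close> to \<open>s(N)\<close>, one step lowers \<open>F\<close> by about
  \<open>\<delta> \<Sum>\<^sub>i\<^sub>j v i j (a i (opt i) - a i j)\<close> with \<open>a = \<nabla>F(o(t+1))\<close>. As \<open>0 \<le> a \<le> \<nabla>F(s(t))\<close>, the
  c-condition bounds this by \<open>c\<close> times the first-order gain \<open>\<delta> \<Sum>\<^sub>i\<^sub>j v i j \<nabla>\<^sub>i\<^sub>jF(s(t))\<close> of the
  trajectory, up to \<open>O(\<delta>\<^sup>2)\<close>. Telescoping over the \<open>N\<close> steps yields
  \<open>OPT - F(s(N)) \<le> c F(s(N)) + O(1/N)\<close>.\<close>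

section \<open>Expectations over independent random labellings\<close>

definition label_prob :: "nat \<Rightarrow> (nat \<Rightarrow> nat \<Rightarrow> real) \<Rightarrow> nat \<Rightarrow> nat \<Rightarrow> real" where
  "label_prob k x i j = (if j = 0 then 1 - (\<Sum>l=1..k. x i l) else x i j)"

text \<open>The expectation of \<open>g \<tau>\<close> when each \<open>i \<in> B\<close> independently receives label \<open>j\<close> with
  probability \<open>label_prob k x i j\<close>, label 0 meaning that \<open>i\<close> lies in none of the \<open>k\<close> sets.\<close>

definition assign_expect ::
    "nat \<Rightarrow> nat set \<Rightarrow> ((nat \<Rightarrow> nat) \<Rightarrow> real) \<Rightarrow> (nat \<Rightarrow> nat \<Rightarrow> real) \<Rightarrow> real" where
  "assign_expect k B g x = (\<Sum>\<tau>\<in>Pi\<^sub>E B (\<lambda>_. {0..k}). g \<tau> * (\<Prod>i\<in>B. label_prob k x i (\<tau> i)))"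

definition in_polytope :: "nat \<Rightarrow> nat set \<Rightarrow> (nat \<Rightarrow> nat \<Rightarrow> real) \<Rightarrow> bool" where
  "in_polytope k B x \<longleftrightarrow> (\<forall>i\<in>B. (\<forall>j\<in>{1..k}. 0 \<le> x i j) \<and> (\<Sum>j=1..k. x i j) \<le> 1)"

lemma in_polytope_subset: "in_polytope k A x \<Longrightarrow> B \<subseteq> A \<Longrightarrow> in_polytope k B x"
  by (auto simp: in_polytope_def)

lemma label_prob_nonneg:
  "in_polytope k B x \<Longrightarrow> i \<in> B \<Longrightarrow> j \<in> {0..k} \<Longrightarrow> 0 \<le> label_prob k x i j"
  by (auto simp: in_polytope_def label_prob_def)

lemma sum_label_prob: "(\<Sum>j\<in>{0..k}. label_prob k x i j) = 1"
proof -
  have "{0..k} = insert 0 {1..k}" by auto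
  then show ?thesis by (simp add: label_prob_def)
qed

lemma sum_label_prob_diff:
  "(\<Sum>j\<in>{0..k}. (label_prob k x' a j - label_prob k x a j) * h j)
     = (\<Sum>l=1..k. (x' a l - x a l) * (h l - h 0))"
proof -
  have "{0..k} = insert 0 {1..k}" by auto
  then have "(\<Sum>j\<in>{0..k}. (label_prob k x' a j - label_prob k x a j) * h j)
      = (\<Sum>l=1..k. (x' a l - x a l) * h l) - (\<Sum>l=1..k. x' a l - x a l) * h 0"
    by (simp add: label_prob_def sum_subtractf algebra_simps)
  also have "\<dots> = (\<Sum>l=1..k. (x' a l - x a l) * (h l - h 0))"
    by (simp add: right_diff_distrib sum_subtractf sum_distrib_right[symmetric])
  finally show ?thesis .
qed

lemma assign_expect_empty: "assign_expect k {} g x = g (\<lambda>_. undefined)"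
  by (simp add: assign_expect_def)

lemma assign_expect_insert:
  assumes "finite B" "a \<notin> B"
  shows "assign_expect k (insert a B) g x
           = (\<Sum>j\<in>{0..k}. label_prob k x a j * assign_expect k B (\<lambda>\<tau>. g (\<tau>(a:=j))) x)"
proof -
  let ?P = "Pi\<^sub>E B (\<lambda>_. {0..k})" and ?w = "\<lambda>\<tau>. \<Prod>i\<in>B. label_prob k x i (\<tau> i)"
  have w_upd: "(\<Prod>i\<in>insert a B. label_prob k x i ((\<tau>(a := j)) i)) = label_prob k x a j * ?w \<tau>"
    for \<tau> j
  proof -
    have "(\<Prod>i\<in>B. label_prob k x i ((\<tau>(a := j)) i)) = ?w \<tau>"
      using assms(2) by (intro prod.cong) auto
    then show ?thesis using assms by simp
  qed
  have "assign_expect k (insert a B) g x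
      = (\<Sum>p\<in>{0..k} \<times> ?P. g ((snd p)(a := fst p))
           * (\<Prod>i\<in>insert a B. label_prob k x i (((snd p)(a := fst p)) i)))"
    unfolding assign_expect_def PiE_insert_eq
    by (subst sum.reindex[OF inj_combinator[OF assms(2)]]) (simp add: case_prod_beta)
  also have "\<dots> = (\<Sum>j\<in>{0..k}. \<Sum>\<tau>\<in>?P. label_prob k x a j * (g (\<tau>(a := j)) * ?w \<tau>))"
    unfolding w_upd by (simp add: sum.cartesian_product' mult_ac)
  also have "\<dots> = (\<Sum>j\<in>{0..k}. label_prob k x a j * assign_expect k B (\<lambda>\<tau>. g (\<tau>(a:=j))) x)"
    by (simp add: assign_expect_def sum_distrib_left)
  finally show ?thesis .
qed

lemma assign_expect_cong:
  assumes "\<forall>i\<in>B. \<forall>j\<in>{1..k}. x i j = x' i j"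
  shows "assign_expect k B g x = assign_expect k B g x'"
proof -
  have "\<And>i j. i \<in> B \<Longrightarrow> j \<in> {0..k} \<Longrightarrow> label_prob k x i j = label_prob k x' i j"
    using assms by (auto simp: label_prob_def intro!: sum.cong)
  then show ?thesis unfolding assign_expect_def
    by (intro sum.cong refl arg_cong2[where f="(*)"] prod.cong) (auto simp: PiE_def Pi_def)
qed

lemma assign_expect_diff:
  "assign_expect k B (\<lambda>\<tau>. g1 \<tau> - g2 \<tau>) x = assign_expect k B g1 x - assign_expect k B g2 x"
  unfolding assign_expect_def by (simp add: sum_subtractf left_diff_distrib)

lemma assign_expect_nonneg:
  "in_polytope k B x \<Longrightarrow> (\<And>\<tau>. 0 \<le> g \<tau>) \<Longrightarrow> 0 \<le> assign_expect k B g x"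
  unfolding assign_expect_def
  by (intro sum_nonneg mult_nonneg_nonneg prod_nonneg) (auto intro: label_prob_nonneg)

lemma assign_expect_const: "finite B \<Longrightarrow> assign_expect k B (\<lambda>_. c) x = c"
  by (induction B rule: finite_induct)
    (simp_all add: assign_expect_empty assign_expect_insert sum_label_prob flip: sum_distrib_right)

lemma assign_expect_abs_le:
  assumes "finite B" "in_polytope k B x" "\<And>\<tau>. \<bar>g \<tau>\<bar> \<le> M"
  shows "\<bar>assign_expect k B g x\<bar> \<le> M"
proof -
  have "0 \<le> M - g \<tau>" "0 \<le> g \<tau> - (- M)" for \<tau>
    using assms(3)[of \<tau>] by auto
  then have "0 \<le> assign_expect k B (\<lambda>\<tau>. M - g \<tau>) x" "0 \<le> assign_expect k B (\<lambda>\<tau>. g \<tau> - (- M)) x"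
    by (simp_all only: assign_expect_nonneg[OF assms(2)])
  then show ?thesis
    unfolding assign_expect_diff assign_expect_const[OF assms(1)] by linarith
qed

lemma assign_expect_insert_diff:
  assumes "finite B" "a \<notin> B"
  shows "assign_expect k (insert a B) g x' - assign_expect k (insert a B) g x
      = (\<Sum>j\<in>{0..k}. label_prob k x' a j *
           (assign_expect k B (\<lambda>\<tau>. g (\<tau>(a:=j))) x' - assign_expect k B (\<lambda>\<tau>. g (\<tau>(a:=j))) x))
        + (\<Sum>l=1..k. (x' a l - x a l) *
           (assign_expect k B (\<lambda>\<tau>. g (\<tau>(a:=l))) x - assign_expect k B (\<lambda>\<tau>. g (\<tau>(a:=0))) x))"
proof -
  let ?h = "\<lambda>x j. assign_expect k B (\<lambda>\<tau>. g (\<tau>(a:=j))) x"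
  have "assign_expect k (insert a B) g x' - assign_expect k (insert a B) g x
      = (\<Sum>j\<in>{0..k}. label_prob k x' a j * (?h x' j - ?h x j))
        + (\<Sum>j\<in>{0..k}. (label_prob k x' a j - label_prob k x a j) * ?h x j)"
    unfolding assign_expect_insert[OF assms] by (simp add: algebra_simps sum_subtractf sum.distrib)
  then show ?thesis unfolding sum_label_prob_diff .
qed

lemma assign_expect_lipschitz:
  assumes "finite B" "in_polytope k B x" "in_polytope k B x'" "\<And>\<tau>. \<bar>g \<tau>\<bar> \<le> M"
  shows "\<bar>assign_expect k B g x' - assign_expect k B g x\<bar>
           \<le> 2 * M * (\<Sum>b\<in>B. \<Sum>j=1..k. \<bar>x' b j - x b j\<bar>)"
  using assms
proof (induction B arbitrary: g rule: finite_induct)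
  case empty
  then show ?case by (simp add: assign_expect_empty)
next
  case (insert a B)
  let ?h = "\<lambda>x j. assign_expect k B (\<lambda>\<tau>. g (\<tau>(a:=j))) x"
  define S where "S = (\<Sum>b\<in>B. \<Sum>j=1..k. \<bar>x' b j - x b j\<bar>)"
  have P: "in_polytope k B x" "in_polytope k B x'"
    using insert.prems by (auto elim: in_polytope_subset)
  have IH: "\<bar>?h x' j - ?h x j\<bar> \<le> 2 * M * S" for j
    unfolding S_def by (rule insert.IH[OF P]) (rule insert.prems)
  have h_bound: "\<bar>?h x j\<bar> \<le> M" for j
    by (rule assign_expect_abs_le[OF insert.hyps(1) P(1)]) (rule insert.prems)
  have "\<bar>\<Sum>j\<in>{0..k}. label_prob k x' a j * (?h x' j - ?h x j)\<bar>
      \<le> (\<Sum>j\<in>{0..k}. label_prob k x' a j * (2 * M * S))"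
    using label_prob_nonneg[OF insert.prems(2)]
    by (intro order.trans[OF sum_abs] sum_mono) (simp add: abs_mult IH mult_left_mono)
  also have "\<dots> = 2 * M * S"
    by (simp add: sum_label_prob flip: sum_distrib_right)
  finally have row_change: "\<bar>\<Sum>j\<in>{0..k}. label_prob k x' a j * (?h x' j - ?h x j)\<bar> \<le> 2 * M * S" .
  have "\<bar>\<Sum>l=1..k. (x' a l - x a l) * (?h x l - ?h x 0)\<bar> \<le> (\<Sum>l=1..k. \<bar>x' a l - x a l\<bar> * (2 * M))"
  proof (intro order.trans[OF sum_abs] sum_mono)
    fix l
    have "\<bar>?h x l - ?h x 0\<bar> \<le> 2 * M" using h_bound[of l] h_bound[of 0] by linarith
    then show "\<bar>(x' a l - x a l) * (?h x l - ?h x 0)\<bar> \<le> \<bar>x' a l - x a l\<bar> * (2 * M)"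
      by (simp add: abs_mult mult_left_mono)
  qed
  then have probs_change:
    "\<bar>\<Sum>l=1..k. (x' a l - x a l) * (?h x l - ?h x 0)\<bar> \<le> 2 * M * (\<Sum>l=1..k. \<bar>x' a l - x a l\<bar>)"
    by (simp add: sum_distrib_left mult_ac)
  have "(\<Sum>b\<in>insert a B. \<Sum>j=1..k. \<bar>x' b j - x b j\<bar>) = (\<Sum>l=1..k. \<bar>x' a l - x a l\<bar>) + S"
    using insert.hyps by (simp add: S_def)
  then show ?case
    using assign_expect_insert_diff[OF insert.hyps, of k g x' x] row_change probs_change
    by (simp add: algebra_simps)
qed

lemma assign_expect_antimono:
  assumes "finite B" "in_polytope k B x" "in_polytope k B x'"
    and "\<forall>i\<in>B. \<forall>j\<in>{1..k}. x i j \<le> x' i j"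
    and "\<forall>b\<in>B. \<forall>j\<in>{1..k}. \<forall>\<tau>. g (\<tau>(b:=j)) \<le> g (\<tau>(b:=0))"
  shows "assign_expect k B g x' \<le> assign_expect k B g x"
  using assms
proof (induction B arbitrary: g rule: finite_induct)
  case empty
  then show ?case by (simp add: assign_expect_empty)
next
  case (insert a B)
  let ?h = "\<lambda>x j. assign_expect k B (\<lambda>\<tau>. g (\<tau>(a:=j))) x"
  have P: "in_polytope k B x" "in_polytope k B x'"
    using insert.prems by (auto elim: in_polytope_subset)
  have IH: "?h x' j \<le> ?h x j" for j
  proof (rule insert.IH[OF P])
    show "\<forall>i\<in>B. \<forall>j\<in>{1..k}. x i j \<le> x' i j" using insert.prems by auto
    show "\<forall>b\<in>B. \<forall>l\<in>{1..k}. \<forall>\<tau>. g (\<tau>(b := l, a := j)) \<le> g (\<tau>(b := 0, a := j))"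
    proof (intro ballI allI)
      fix b l \<tau> assume b: "b \<in> B" and l: "l \<in> {1..k}"
      then have "a \<noteq> b" using insert.hyps by auto
      moreover have "g ((\<tau>(a:=j))(b:=l)) \<le> g ((\<tau>(a:=j))(b:=0))" using insert.prems(4) b l by blast
      ultimately show "g (\<tau>(b := l, a := j)) \<le> g (\<tau>(b := 0, a := j))"
        by (simp add: fun_upd_twist)
    qed
  qed
  have "(\<Sum>j\<in>{0..k}. label_prob k x' a j * (?h x' j - ?h x j)) \<le> 0"
    using IH label_prob_nonneg[OF insert.prems(2)] by (intro sum_nonpos mult_nonneg_nonpos) auto
  moreover have "(\<Sum>l=1..k. (x' a l - x a l) * (?h x l - ?h x 0)) \<le> 0"
  proof (intro sum_nonpos mult_nonneg_nonpos)
    fix l assume l: "l \<in> {1..k}"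
    show "0 \<le> x' a l - x a l" using insert.prems(3) l by simp
    have "0 \<le> assign_expect k B (\<lambda>\<tau>. g (\<tau>(a:=0)) - g (\<tau>(a:=l))) x"
      using insert.prems(4) l by (intro assign_expect_nonneg[OF P(1)]) (simp del: fun_upd_apply)
    then show "?h x l - ?h x 0 \<le> 0" by (simp add: assign_expect_diff)
  qed
  ultimately show ?case
    using assign_expect_insert_diff[OF insert.hyps, of k g x' x] by linarith
qed

lemma assign_expect_vertex:
  assumes "finite B" "\<forall>i\<in>B. \<sigma> i \<in> {0..k}"
    and "\<forall>i\<in>B. \<forall>j\<in>{1..k}. x i j = (if \<sigma> i = j then 1 else 0)"
  shows "assign_expect k B g x = g (restrict \<sigma> B)"
  using assms
proof (induction B arbitrary: g rule: finite_induct)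
  case empty
  then show ?case by (simp add: assign_expect_empty restrict_def)
next
  case (insert a B)
  have IH: "assign_expect k B (\<lambda>\<tau>. g (\<tau>(a:=j))) x = g ((restrict \<sigma> B)(a:=j))" for j
    using insert.IH[of "\<lambda>\<tau>. g (\<tau>(a:=j))"] insert.prems by (auto simp: restrict_def)
  have prob: "label_prob k x a j = (if j = \<sigma> a then 1 else 0)" if "j \<in> {0..k}" for j
  proof (cases "j = 0")
    case True
    have "(\<Sum>l=1..k. x a l) = (\<Sum>l=1..k. if \<sigma> a = l then 1 else 0)"
      using insert.prems by (intro sum.cong) auto
    then show ?thesis using True insert.prems by (auto simp: label_prob_def)
  next
    case False
    then show ?thesis using insert.prems that by (auto simp: label_prob_def)
  qed
  have "assign_expect k (insert a B) g x
      = (\<Sum>j\<in>{0..k}. if j = \<sigma> a then g ((restrict \<sigma> B)(a:=j)) else 0)"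
    unfolding assign_expect_insert[OF insert.hyps] IH by (intro sum.cong) (auto simp: prob)
  also have "\<dots> = g ((restrict \<sigma> B)(a:=\<sigma> a))"
    using insert.prems by (simp add: sum.delta')
  also have "(restrict \<sigma> B)(a:=\<sigma> a) = restrict \<sigma> (insert a B)"
    by (auto simp: restrict_def)
  finally show ?case .
qed

section \<open>The multilinear extension as an expectation\<close>

definition tuple_of :: "nat \<Rightarrow> nat \<Rightarrow> (nat \<Rightarrow> nat) \<Rightarrow> (nat \<Rightarrow> nat set)" where
  "tuple_of n k \<tau> = (\<lambda>l. if l \<in> {1..k} then {i\<in>{1..n}. \<tau> i = l} else {})"

definition labels_of :: "nat \<Rightarrow> nat \<Rightarrow> (nat \<Rightarrow> nat set) \<Rightarrow> (nat \<Rightarrow> nat)" where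
  "labels_of n k S = (\<lambda>i. if i \<notin> {1..n} then undefined
     else if \<exists>l\<in>{1..k}. i \<in> S l then (SOME l. l\<in>{1..k} \<and> i \<in> S l) else 0)"

lemma tuple_of_in_ktuples: "tuple_of n k \<tau> \<in> ktuples n k"
  by (auto simp: tuple_of_def ktuples_def)

lemma labels_of_tuple_of:
  assumes \<tau>: "\<tau> \<in> Pi\<^sub>E {1..n} (\<lambda>_. {0..k})"
  shows "labels_of n k (tuple_of n k \<tau>) = \<tau>"
proof
  fix i
  show "labels_of n k (tuple_of n k \<tau>) i = \<tau> i"
  proof (cases "i \<in> {1..n}")
    case True
    show ?thesis
    proof (cases "\<tau> i = 0")
      case True
      then show ?thesis using \<open>i \<in> {1..n}\<close> by (auto simp: labels_of_def tuple_of_def)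
    next
      case False
      then have ex: "\<exists>l\<in>{1..k}. i \<in> tuple_of n k \<tau> l"
        using \<tau> True by (auto simp: tuple_of_def PiE_def Pi_def)
      have "(SOME l. l\<in>{1..k} \<and> i \<in> tuple_of n k \<tau> l) = \<tau> i"
        using ex by (rule_tac someI2_ex) (auto simp: tuple_of_def split: if_splits)
      then show ?thesis using ex True by (simp add: labels_of_def)
    qed
  next
    case False
    then show ?thesis using \<tau> by (auto simp: labels_of_def PiE_def extensional_def)
  qed
qed

lemma labels_of_in_PiE: "labels_of n k S \<in> Pi\<^sub>E {1..n} (\<lambda>_. {0..k})"
proof -
  have "(SOME l. l\<in>{1..k} \<and> i \<in> S l) \<in> {0..k}" if "\<exists>l\<in>{1..k}. i \<in> S l" for i
    using that by (rule_tac someI2_ex) auto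
  then show ?thesis by (auto simp: labels_of_def PiE_def Pi_def extensional_def)
qed

lemma tuple_of_labels_of:
  assumes S: "S \<in> ktuples n k"
  shows "tuple_of n k (labels_of n k S) = S"
proof
  fix l
  show "tuple_of n k (labels_of n k S) l = S l"
  proof (cases "l \<in> {1..k}")
    case False
    then show ?thesis using S by (auto simp: tuple_of_def ktuples_def)
  next
    case True
    have "i \<in> S l \<longleftrightarrow> i \<in> {1..n} \<and> labels_of n k S i = l" for i
    proof
      assume i: "i \<in> S l"
      then have "i \<in> {1..n}" using S True unfolding ktuples_def by blast
      moreover have "(SOME l'. l'\<in>{1..k} \<and> i \<in> S l') = l"
        using S True i unfolding ktuples_def by (intro some_equality) blast+
      ultimately show "i \<in> {1..n} \<and> labels_of n k S i = l"
        using i True by (auto simp: labels_of_def)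
    next
      assume "i \<in> {1..n} \<and> labels_of n k S i = l"
      then have ex: "\<exists>l\<in>{1..k}. i \<in> S l" and "(SOME l. l\<in>{1..k} \<and> i \<in> S l) = l"
        using True by (auto simp: labels_of_def split: if_splits)
      then show "i \<in> S l" using someI_ex[OF ex[unfolded Bex_def]] by simp
    qed
    then show ?thesis using True by (auto simp: tuple_of_def)
  qed
qed

lemma ktuples_eq_image: "ktuples n k = tuple_of n k ` Pi\<^sub>E {1..n} (\<lambda>_. {0..k})"
  using tuple_of_in_ktuples tuple_of_labels_of labels_of_in_PiE
  by (metis (no_types, lifting) image_eqI subsetI image_subsetI subset_antisym)

lemma finite_ktuples: "finite (ktuples n k)"
  unfolding ktuples_eq_image by (intro finite_imageI finite_PiE) auto

lemma multilinear_weight_eq: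
  assumes \<tau>: "\<tau> \<in> Pi\<^sub>E {1..n} (\<lambda>_. {0..k})"
  shows "(\<Prod>j\<in>{1..k}. \<Prod>i\<in>tuple_of n k \<tau> j. x i j)
           * (\<Prod>i\<in>{1..n} - (\<Union>j\<in>{1..k}. tuple_of n k \<tau> j). 1 - (\<Sum>j=1..k. x i j))
         = (\<Prod>i\<in>{1..n}. label_prob k x i (\<tau> i))"
proof -
  let ?A = "{i\<in>{1..n}. \<tau> i \<noteq> 0}" and ?Z = "{i\<in>{1..n}. \<tau> i = 0}"
  have unassigned: "{1..n} - (\<Union>j\<in>{1..k}. tuple_of n k \<tau> j) = ?Z"
    using \<tau> by (force simp: tuple_of_def PiE_def Pi_def)
  have "(\<Prod>i\<in>?A. x i (\<tau> i)) = (\<Prod>j\<in>{1..k}. \<Prod>i\<in>{i. i \<in> ?A \<and> \<tau> i = j}. x i (\<tau> i))"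
    using \<tau> by (intro prod.group[symmetric]) (auto simp: PiE_def Pi_def)
  also have "\<dots> = (\<Prod>j\<in>{1..k}. \<Prod>i\<in>tuple_of n k \<tau> j. x i j)"
    by (intro prod.cong) (auto simp: tuple_of_def)
  finally have assigned: "(\<Prod>j\<in>{1..k}. \<Prod>i\<in>tuple_of n k \<tau> j. x i j) = (\<Prod>i\<in>?A. x i (\<tau> i))" ..
  have "(\<Prod>i\<in>{1..n}. label_prob k x i (\<tau> i))
      = (\<Prod>i\<in>?A. label_prob k x i (\<tau> i)) * (\<Prod>i\<in>?Z. label_prob k x i (\<tau> i))"
    by (subst prod.union_disjoint[symmetric]) (auto intro: prod.cong)
  also have "\<dots> = (\<Prod>i\<in>?A. x i (\<tau> i)) * (\<Prod>i\<in>?Z. 1 - (\<Sum>j=1..k. x i j))"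
    by (intro arg_cong2[where f="(*)"] prod.cong) (auto simp: label_prob_def)
  finally show ?thesis using assigned unassigned by simp
qed

lemma multilinear_ext_eq_assign_expect:
  "multilinear_ext n k f x = assign_expect k {1..n} (\<lambda>\<tau>. f (tuple_of n k \<tau>)) x"
  unfolding multilinear_ext_def assign_expect_def
proof (rule sum.reindex_bij_witness[symmetric, where i="labels_of n k" and j="tuple_of n k"])
  fix \<tau> assume \<tau>: "\<tau> \<in> Pi\<^sub>E {1..n} (\<lambda>_. {0..k})"
  show "labels_of n k (tuple_of n k \<tau>) = \<tau>" using labels_of_tuple_of[OF \<tau>] .
  show "tuple_of n k \<tau> \<in> ktuples n k" by (rule tuple_of_in_ktuples)
  show "f (tuple_of n k \<tau>) * (\<Prod>j\<in>{1..k}. \<Prod>i\<in>tuple_of n k \<tau> j. x i j) *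
        (\<Prod>i\<in>{1..n} - (\<Union>j\<in>{1..k}. tuple_of n k \<tau> j). 1 - (\<Sum>j=1..k. x i j)) =
        f (tuple_of n k \<tau>) * (\<Prod>i\<in>{1..n}. label_prob k x i (\<tau> i))"
    using multilinear_weight_eq[OF \<tau>] by (simp add: mult.assoc)
next
  fix S assume S: "S \<in> ktuples n k"
  show "tuple_of n k (labels_of n k S) = S" by (rule tuple_of_labels_of[OF S])
  show "labels_of n k S \<in> Pi\<^sub>E {1..n} (\<lambda>_. {0..k})" by (rule labels_of_in_PiE)
qed

definition marginal ::
    "nat \<Rightarrow> nat \<Rightarrow> ((nat \<Rightarrow> nat set) \<Rightarrow> real) \<Rightarrow> (nat \<Rightarrow> nat \<Rightarrow> real) \<Rightarrow> nat \<Rightarrow> nat \<Rightarrow> real" where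
  "marginal n k f x a j = assign_expect k ({1..n}-{a})
     (\<lambda>\<tau>. f (tuple_of n k (\<tau>(a:=j))) - f (tuple_of n k (\<tau>(a:=0)))) x"

lemma multilinear_ext_row_expansion:
  assumes "a \<in> {1..n}"
  shows "multilinear_ext n k f x
    = (\<Sum>j\<in>{0..k}. label_prob k x a j
         * assign_expect k ({1..n}-{a}) (\<lambda>\<tau>. f (tuple_of n k (\<tau>(a:=j)))) x)"
proof -
  have "{1..n} = insert a ({1..n}-{a})" using assms by auto
  then show ?thesis
    unfolding multilinear_ext_eq_assign_expect
    by (subst (1) \<open>{1..n} = _\<close>, subst assign_expect_insert) auto
qed

lemma multilinear_ext_row_affine:
  assumes a: "a \<in> {1..n}" and same_rows: "\<forall>i\<in>{1..n}-{a}. \<forall>j\<in>{1..k}. z i j = w i j"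
  shows "multilinear_ext n k f z - multilinear_ext n k f w
           = (\<Sum>j=1..k. (z a j - w a j) * marginal n k f w a j)"
proof -
  define E where "E j = assign_expect k ({1..n}-{a}) (\<lambda>\<tau>. f (tuple_of n k (\<tau>(a:=j)))) w" for j
  have E_z: "assign_expect k ({1..n}-{a}) (\<lambda>\<tau>. f (tuple_of n k (\<tau>(a:=j)))) z = E j" for j
    unfolding E_def by (rule assign_expect_cong) (use same_rows in auto)
  have "multilinear_ext n k f z - multilinear_ext n k f w
      = (\<Sum>j\<in>{0..k}. (label_prob k z a j - label_prob k w a j) * E j)"
    unfolding multilinear_ext_row_expansion[OF a, where x=z]
      multilinear_ext_row_expansion[OF a, where x=w] E_z E_def[symmetric]
    by (simp add: sum_subtractf left_diff_distrib)
  also have "\<dots> = (\<Sum>l=1..k. (z a l - w a l) * (E l - E 0))"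
    by (rule sum_label_prob_diff)
  also have "\<dots> = (\<Sum>j=1..k. (z a j - w a j) * marginal n k f w a j)"
    unfolding E_def marginal_def assign_expect_diff ..
  finally show ?thesis .
qed

lemma partial_ij_multilinear_ext:
  assumes a: "a \<in> {1..n}" and j: "j \<in> {1..k}"
  shows "partial_ij (multilinear_ext n k f) x a j = marginal n k f x a j"
proof -
  let ?F = "multilinear_ext n k f" and ?m = "marginal n k f x a j"
  have line: "(\<lambda>h. ?F (x(a := (x a)(j := h)))) = (\<lambda>h. ?F x + (h - x a j) * ?m)"
  proof
    fix h
    have "?F (x(a := (x a)(j := h))) - ?F x
        = (\<Sum>l=1..k. ((x(a := (x a)(j := h))) a l - x a l) * marginal n k f x a l)"
      by (rule multilinear_ext_row_affine[OF a]) auto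
    also have "\<dots> = (\<Sum>l=1..k. if l = j then (h - x a j) * ?m else 0)"
      by (intro sum.cong) auto
    also have "\<dots> = (h - x a j) * ?m" using j by (simp add: sum.delta')
    finally show "?F (x(a := (x a)(j := h))) = ?F x + (h - x a j) * ?m"
      by simp
  qed
  have "((\<lambda>h. ?F x + (h - x a j) * ?m) has_real_derivative ?m) (at (x a j))"
    by (auto intro!: derivative_eq_intros)
  then show ?thesis unfolding partial_ij_def line by (rule DERIV_imp_deriv)
qed

lemma marginal_nonneg:
  assumes "k_monotone n k f" "in_polytope k {1..n} x" "j \<in> {1..k}"
  shows "0 \<le> marginal n k f x a j"
  unfolding marginal_def
proof (rule assign_expect_nonneg)
  show "in_polytope k ({1..n} - {a}) x" using assms(2) by (rule in_polytope_subset) auto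
  fix \<tau>
  have "kpreceq k (tuple_of n k (\<tau>(a:=0))) (tuple_of n k (\<tau>(a:=j)))"
    using assms(3) by (auto simp: kpreceq_def tuple_of_def)
  then show "0 \<le> f (tuple_of n k (\<tau>(a:=j))) - f (tuple_of n k (\<tau>(a:=0)))"
    using assms(1) tuple_of_in_ktuples by (auto simp: k_monotone_def)
qed

lemma k_submodular_two_labels:
  assumes sub: "k_submodular n k f" and ab: "a \<noteq> b" and j: "j \<in> {1..k}" and j': "j' \<in> {1..k}"
  shows "f (tuple_of n k (\<sigma>(a:=j, b:=j'))) + f (tuple_of n k (\<sigma>(a:=0, b:=0)))
           \<le> f (tuple_of n k (\<sigma>(a:=j, b:=0))) + f (tuple_of n k (\<sigma>(a:=0, b:=j')))"
proof -
  let ?T = "tuple_of n k"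
  define \<sigma>0 where "\<sigma>0 = \<sigma>(a:=0, b:=0)"
  have \<sigma>0_ab: "\<sigma>0 a = 0" "\<sigma>0 b = 0" using ab unfolding \<sigma>0_def by auto
  have meet: "kmeet (?T (\<sigma>0(a:=j))) (?T (\<sigma>0(b:=j'))) = ?T \<sigma>0"
    using \<sigma>0_ab ab j j' by (auto simp: kmeet_def tuple_of_def fun_eq_iff)
  have "i \<in> kjoin k (?T (\<sigma>0(a:=j))) (?T (\<sigma>0(b:=j'))) l \<longleftrightarrow> i \<in> ?T (\<sigma>0(a:=j, b:=j')) l" for i l
  proof (cases "l \<in> {1..k}")
    case True
    then show ?thesis
      using j j' \<sigma>0_ab ab by (cases "i = a"; cases "i = b") (auto simp: kjoin_def tuple_of_def)
  qed (auto simp: kjoin_def tuple_of_def)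
  then have join: "kjoin k (?T (\<sigma>0(a:=j))) (?T (\<sigma>0(b:=j'))) = ?T (\<sigma>0(a:=j, b:=j'))"
    by blast
  have "f (kmeet (?T (\<sigma>0(a:=j))) (?T (\<sigma>0(b:=j')))) + f (kjoin k (?T (\<sigma>0(a:=j))) (?T (\<sigma>0(b:=j'))))
      \<le> f (?T (\<sigma>0(a:=j))) + f (?T (\<sigma>0(b:=j')))"
    using sub tuple_of_in_ktuples unfolding k_submodular_def by blast
  moreover have "\<sigma>(a:=j, b:=0) = \<sigma>0(a:=j)" "\<sigma>(a:=0, b:=j') = \<sigma>0(b:=j')"
    "\<sigma>(a:=j, b:=j') = \<sigma>0(a:=j, b:=j')"
    using ab unfolding \<sigma>0_def by (auto simp: fun_eq_iff)
  ultimately show ?thesis unfolding meet join \<sigma>0_def[symmetric] by simp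
qed

lemma marginal_antimono:
  assumes sub: "k_submodular n k f" and a: "a \<in> {1..n}" and j: "j \<in> {1..k}"
    and P: "in_polytope k {1..n} x" "in_polytope k {1..n} x'"
    and le: "\<forall>i\<in>{1..n}. \<forall>j\<in>{1..k}. x i j \<le> x' i j"
  shows "marginal n k f x' a j \<le> marginal n k f x a j"
  unfolding marginal_def
proof (rule assign_expect_antimono)
  show "in_polytope k ({1..n} - {a}) x" "in_polytope k ({1..n} - {a}) x'"
    using P by (auto intro: in_polytope_subset)
  show "\<forall>i\<in>{1..n} - {a}. \<forall>j\<in>{1..k}. x i j \<le> x' i j" using le by auto
  show "\<forall>b\<in>{1..n} - {a}. \<forall>j'\<in>{1..k}. \<forall>\<tau>.
          f (tuple_of n k (\<tau>(b := j', a := j))) - f (tuple_of n k (\<tau>(b := j', a := 0)))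
        \<le> f (tuple_of n k (\<tau>(b := 0, a := j))) - f (tuple_of n k (\<tau>(b := 0, a := 0)))"
  proof (intro ballI allI)
    fix b j' and \<tau> :: "nat \<Rightarrow> nat" assume b: "b \<in> {1..n} - {a}" and j': "j' \<in> {1..k}"
    then have ab: "a \<noteq> b" by auto
    then have "\<tau>(b := u, a := v) = \<tau>(a := v, b := u)" for u v :: nat by (auto simp: fun_eq_iff)
    then show "f (tuple_of n k (\<tau>(b := j', a := j))) - f (tuple_of n k (\<tau>(b := j', a := 0)))
        \<le> f (tuple_of n k (\<tau>(b := 0, a := j))) - f (tuple_of n k (\<tau>(b := 0, a := 0)))"
      using k_submodular_two_labels[OF sub ab j j', of \<tau>] by simp
  qed
qed simp

lemma f_tuple_of_le_OPT: "f (tuple_of n k \<tau>) \<le> OPT n k f"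
  unfolding OPT_def using tuple_of_in_ktuples finite_ktuples by (intro Max_ge) auto

lemma abs_f_tuple_of_le_OPT:
  "\<forall>S\<in>ktuples n k. 0 \<le> f S \<Longrightarrow> \<bar>f (tuple_of n k \<tau>)\<bar> \<le> OPT n k f"
  using f_tuple_of_le_OPT[of f n k \<tau>] tuple_of_in_ktuples[of n k \<tau>] by auto

lemma multilinear_ext_nonneg:
  "\<forall>S\<in>ktuples n k. 0 \<le> f S \<Longrightarrow> in_polytope k {1..n} x \<Longrightarrow> 0 \<le> multilinear_ext n k f x"
  unfolding multilinear_ext_eq_assign_expect
  by (intro assign_expect_nonneg) (auto intro: tuple_of_in_ktuples)

lemma exists_optimal_full_labelling:
  assumes "k_monotone n k f" "1 \<le> k"
  obtains opt where "\<forall>i\<in>{1..n}. opt i \<in> {1..k}" "f (tuple_of n k opt) = OPT n k f"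
proof -
  obtain S where S: "S \<in> ktuples n k" "f S = OPT n k f"
    unfolding OPT_def using finite_ktuples tuple_of_in_ktuples
    by (metis (no_types, lifting) Max_in empty_iff finite_imageI image_iff image_is_empty)
  define opt where "opt i = (if labels_of n k S i = 0 then 1 else labels_of n k S i)" for i
  have "opt i \<in> {1..k}" if "i \<in> {1..n}" for i
    using labels_of_in_PiE[of n k S] that assms(2) by (auto simp: opt_def PiE_def Pi_def)
  moreover have "S l \<subseteq> tuple_of n k opt l" if "l \<in> {1..k}" for l
  proof -
    have "S l = tuple_of n k (labels_of n k S) l" using tuple_of_labels_of[OF S(1)] by simp
    then show ?thesis using that by (auto simp: tuple_of_def opt_def)
  qed
  then have "kpreceq k S (tuple_of n k opt)" by (simp add: kpreceq_def)
  then have "f S \<le> f (tuple_of n k opt)"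
    using assms(1) S(1) tuple_of_in_ktuples by (auto simp: k_monotone_def)
  then have "f (tuple_of n k opt) = OPT n k f"
    using S(2) f_tuple_of_le_OPT[of f n k opt] by simp
  ultimately show ?thesis using that by blast
qed

definition l1_dist :: "nat \<Rightarrow> nat \<Rightarrow> (nat \<Rightarrow> nat \<Rightarrow> real) \<Rightarrow> (nat \<Rightarrow> nat \<Rightarrow> real) \<Rightarrow> real" where
  "l1_dist n k x x' = (\<Sum>i=1..n. \<Sum>j=1..k. \<bar>x' i j - x i j\<bar>)"

lemma marginal_lipschitz:
  assumes "in_polytope k {1..n} x" "in_polytope k {1..n} x'" and M: "\<And>\<tau>. \<bar>f (tuple_of n k \<tau>)\<bar> \<le> M"
  shows "\<bar>marginal n k f x' a j - marginal n k f x a j\<bar> \<le> 4 * M * l1_dist n k x x'"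
proof -
  have "\<bar>marginal n k f x' a j - marginal n k f x a j\<bar>
      \<le> 2 * (2 * M) * (\<Sum>b\<in>{1..n}-{a}. \<Sum>l=1..k. \<bar>x' b l - x b l\<bar>)"
    unfolding marginal_def
  proof (rule assign_expect_lipschitz)
    show "in_polytope k ({1..n} - {a}) x" "in_polytope k ({1..n} - {a}) x'"
      using assms(1,2) by (auto elim: in_polytope_subset)
    show "\<bar>f (tuple_of n k (\<tau>(a := j))) - f (tuple_of n k (\<tau>(a := 0)))\<bar> \<le> 2 * M" for \<tau>
      using M[of "\<tau>(a := j)"] M[of "\<tau>(a := 0)"] by linarith
  qed simp
  also have "(\<Sum>b\<in>{1..n}-{a}. \<Sum>l=1..k. \<bar>x' b l - x b l\<bar>) \<le> l1_dist n k x x'"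
    unfolding l1_dist_def by (intro sum_mono2) (auto intro: sum_nonneg)
  finally show ?thesis
    using M[of undefined] by (simp add: mult_left_mono)
qed

text \<open>Replacing the rows in \<open>A\<close> one at a time, each replacement changes \<open>F\<close> exactly by the
  marginals at the current hybrid point, which differ from those at \<open>x\<close> by \<open>O(l1_dist)\<close>.\<close>

lemma multilinear_ext_first_order:
  assumes P: "in_polytope k {1..n} x" "in_polytope k {1..n} x'"
    and M: "\<And>\<tau>. \<bar>f (tuple_of n k \<tau>)\<bar> \<le> M"
  shows "\<bar>multilinear_ext n k f x' - multilinear_ext n k f x
          - (\<Sum>a=1..n. \<Sum>j=1..k. (x' a j - x a j) * marginal n k f x a j)\<bar>
         \<le> 4 * M * (l1_dist n k x x')^2"
proof -
  let ?F = "multilinear_ext n k f" and ?d = "l1_dist n k x x'"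
  define hybrid where "hybrid A = (\<lambda>i. if i \<in> A then x' i else x i)" for A
  have hybrid_P: "in_polytope k {1..n} (hybrid A)" for A
    using P unfolding in_polytope_def hybrid_def by auto
  have hybrid_bound:
    "\<bar>?F (hybrid A) - ?F x - (\<Sum>a\<in>A. \<Sum>j=1..k. (x' a j - x a j) * marginal n k f x a j)\<bar>
         \<le> 4 * M * (\<Sum>a\<in>A. \<Sum>j=1..k. \<bar>x' a j - x a j\<bar>) * ?d" if "A \<subseteq> {1..n}" for A
  proof -
    have "finite A" using that finite_subset by blast
    then show ?thesis using that
    proof (induction A rule: finite_subset_induct)
      case empty
      then show ?case by (simp add: hybrid_def)
    next
      case (insert a A)
      have "?F (hybrid (insert a A)) - ?F (hybrid A)
         = (\<Sum>j=1..k. (hybrid (insert a A) a j - hybrid A a j) * marginal n k f (hybrid A) a j)"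
        by (rule multilinear_ext_row_affine[OF insert.hyps(2)]) (auto simp: hybrid_def)
      then have row: "?F (hybrid (insert a A)) - ?F (hybrid A)
           = (\<Sum>j=1..k. (x' a j - x a j) * marginal n k f (hybrid A) a j)"
        using insert.hyps by (simp add: hybrid_def)
      have "\<bar>(\<Sum>j=1..k. (x' a j - x a j) * marginal n k f (hybrid A) a j)
             - (\<Sum>j=1..k. (x' a j - x a j) * marginal n k f x a j)\<bar>
          \<le> (\<Sum>j=1..k. \<bar>x' a j - x a j\<bar> * (4 * M * l1_dist n k x (hybrid A)))"
        unfolding sum_subtractf[symmetric] right_diff_distrib[symmetric]
        using marginal_lipschitz[where f=f, OF P(1) hybrid_P[of A] M]
        by (intro order.trans[OF sum_abs] sum_mono) (simp add: abs_mult mult_left_mono)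
      also have "\<dots> \<le> (\<Sum>j=1..k. \<bar>x' a j - x a j\<bar> * (4 * M * ?d))"
      proof -
        have "l1_dist n k x (hybrid A) \<le> ?d"
          unfolding l1_dist_def by (intro sum_mono) (auto simp: hybrid_def)
        then show ?thesis
          using M[of undefined] by (intro sum_mono mult_left_mono) auto
      qed
      finally show ?case
        using insert.IH insert.hyps row
        by (simp add: algebra_simps sum_distrib_left sum_distrib_right)
    qed
  qed
  moreover have "?F (hybrid {1..n}) = ?F x'"
    unfolding multilinear_ext_eq_assign_expect by (rule assign_expect_cong) (auto simp: hybrid_def)
  ultimately show ?thesis
    using hybrid_bound[of "{1..n}"] by (simp add: l1_dist_def power2_eq_square mult_ac)
qed

section \<open>Analysis of the meta-framework\<close>

lemma traj_0: "traj N v 0 = (\<lambda>i j. 0)"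
  by (simp add: traj_def fun_eq_iff)

lemma traj_Suc: "traj N v (Suc t) i j = traj N v t i j + v t i j / real N"
  by (simp add: traj_def)

locale framework_run =
  fixes n k :: nat and f :: "(nat \<Rightarrow> nat set) \<Rightarrow> real" and c :: real
    and N :: nat and v :: "nat \<Rightarrow> nat \<Rightarrow> nat \<Rightarrow> real" and opt :: "nat \<Rightarrow> nat"
  assumes f_nonneg: "\<forall>S\<in>ktuples n k. 0 \<le> f S"
    and f_mono: "k_monotone n k f"
    and f_submod: "k_submodular n k f"
    and c_nonneg: "0 \<le> c"
    and N_pos: "0 < N"
    and direction_valid: "\<And>t. t < N \<Longrightarrow> valid_direction n k (v t)"
    and direction_c_condition:
      "\<And>t. t < N \<Longrightarrow> c_condition n k c (v t) (partial_ij (multilinear_ext n k f) (traj N v t))"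
    and opt_range: "\<And>i. i \<in> {1..n} \<Longrightarrow> opt i \<in> {1..k}"
    and opt_value: "f (tuple_of n k opt) = OPT n k f"
begin

abbreviation F :: "(nat \<Rightarrow> nat \<Rightarrow> real) \<Rightarrow> real" where
  "F \<equiv> multilinear_ext n k f"

abbreviation s :: "nat \<Rightarrow> nat \<Rightarrow> nat \<Rightarrow> real" where
  "s \<equiv> traj N v"

definition opt_vertex :: "nat \<Rightarrow> nat \<Rightarrow> real" where
  "opt_vertex i j = (if j = opt i then 1 else 0)"

definition opt_path :: "nat \<Rightarrow> nat \<Rightarrow> nat \<Rightarrow> real" where
  "opt_path t i j = s t i j + (1 - real t / real N) * opt_vertex i j"

definition gain_rate :: "nat \<Rightarrow> real" where
  "gain_rate t = (\<Sum>i=1..n. \<Sum>j=1..k. v t i j * marginal n k f (s t) i j)"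

definition loss_rate :: "nat \<Rightarrow> real" where
  "loss_rate t = (\<Sum>i=1..n. \<Sum>j=1..k. v t i j *
     (marginal n k f (opt_path (Suc t)) i (opt i) - marginal n k f (opt_path (Suc t)) i j))"

lemma OPT_nonneg: "0 \<le> OPT n k f"
  using abs_f_tuple_of_le_OPT[OF f_nonneg] by (meson abs_ge_zero order_trans)

lemma direction_nonneg: "t < N \<Longrightarrow> i \<in> {1..n} \<Longrightarrow> j \<in> {1..k} \<Longrightarrow> 0 \<le> v t i j"
  using direction_valid by (auto simp: valid_direction_def)

lemma direction_row_sum: "t < N \<Longrightarrow> i \<in> {1..n} \<Longrightarrow> (\<Sum>j=1..k. v t i j) = 1"
  using direction_valid by (auto simp: valid_direction_def)

lemma opt_vertex_row_sum: "i \<in> {1..n} \<Longrightarrow> (\<Sum>j=1..k. opt_vertex i j) = 1"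
  using opt_range by (simp add: opt_vertex_def sum.delta')

lemma traj_nonneg: "t \<le> N \<Longrightarrow> i \<in> {1..n} \<Longrightarrow> j \<in> {1..k} \<Longrightarrow> 0 \<le> s t i j"
  unfolding traj_def by (intro sum_nonneg) (auto intro!: divide_nonneg_nonneg direction_nonneg)

lemma traj_row_sum: "t \<le> N \<Longrightarrow> i \<in> {1..n} \<Longrightarrow> (\<Sum>j=1..k. s t i j) = real t / real N"
proof (induction t)
  case 0
  then show ?case by (simp add: traj_0)
next
  case (Suc t)
  then have "t < N" by simp
  have "(\<Sum>j=1..k. s (Suc t) i j) = (\<Sum>j=1..k. s t i j) + (\<Sum>j=1..k. v t i j) / real N"
    by (simp add: traj_Suc sum.distrib sum_divide_distrib)
  also have "\<dots> = real t / real N + 1 / real N"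
    using Suc direction_row_sum[OF \<open>t < N\<close> Suc.prems(2)] by simp
  finally show ?case by (simp add: add_divide_distrib)
qed

lemma traj_in_polytope: "t \<le> N \<Longrightarrow> in_polytope k {1..n} (s t)"
  using N_pos traj_nonneg traj_row_sum unfolding in_polytope_def by simp

lemma opt_path_row_sum: "t \<le> N \<Longrightarrow> i \<in> {1..n} \<Longrightarrow> (\<Sum>j=1..k. opt_path t i j) = 1"
  using traj_row_sum[of t i] opt_vertex_row_sum[of i]
  by (simp add: opt_path_def sum.distrib flip: sum_distrib_left)

lemma opt_path_in_polytope:
  assumes "t \<le> N"
  shows "in_polytope k {1..n} (opt_path t)"
proof -
  have "0 \<le> 1 - real t / real N" using assms N_pos by simp
  then show ?thesis
    using assms traj_nonneg opt_path_row_sum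
    by (auto simp: in_polytope_def opt_path_def opt_vertex_def)
qed

lemma opt_path_Suc:
  "t < N \<Longrightarrow> opt_path t i j - opt_path (Suc t) i j = (opt_vertex i j - v t i j) / real N"
  using N_pos by (simp add: opt_path_def traj_Suc field_simps)

lemma F_opt_path_0: "F (opt_path 0) = OPT n k f"
proof -
  have "F (opt_path 0) = f (tuple_of n k (restrict opt {1..n}))"
    unfolding multilinear_ext_eq_assign_expect
    using opt_range by (intro assign_expect_vertex) (auto simp: opt_path_def opt_vertex_def traj_0)
  also have "tuple_of n k (restrict opt {1..n}) = tuple_of n k opt"
    by (auto simp: tuple_of_def fun_eq_iff)
  finally show ?thesis using opt_value by simp
qed

lemma F_opt_path_N: "F (opt_path N) = F (s N)"
  unfolding multilinear_ext_eq_assign_expect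
  using N_pos by (intro assign_expect_cong) (simp add: opt_path_def)

lemma gain_step:
  assumes "t < N"
  shows "gain_rate t / real N - 4 * OPT n k f * (real n / real N)^2 \<le> F (s (Suc t)) - F (s t)"
proof -
  have "l1_dist n k (s t) (s (Suc t)) = (\<Sum>i=1..n. (\<Sum>j=1..k. v t i j) / real N)"
    unfolding l1_dist_def using assms
    by (intro sum.cong refl) (simp add: traj_Suc direction_nonneg sum_divide_distrib)
  also have "\<dots> = real n / real N"
    using direction_row_sum[OF assms] by simp
  finally have dist: "l1_dist n k (s t) (s (Suc t)) = real n / real N" .
  have "(\<Sum>i=1..n. \<Sum>j=1..k. (s (Suc t) i j - s t i j) * marginal n k f (s t) i j)
      = gain_rate t / real N"
    by (simp add: gain_rate_def traj_Suc sum_divide_distrib)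
  then show ?thesis
    using multilinear_ext_first_order[where f=f, OF traj_in_polytope traj_in_polytope
        abs_f_tuple_of_le_OPT[OF f_nonneg], of t "Suc t"] assms
    unfolding dist abs_le_iff by simp
qed

lemma loss_step:
  assumes "t < N"
  shows "F (opt_path t) - F (opt_path (Suc t))
           \<le> loss_rate t / real N + 16 * OPT n k f * (real n / real N)^2"
proof -
  let ?a = "marginal n k f (opt_path (Suc t))"
  have "l1_dist n k (opt_path (Suc t)) (opt_path t) \<le> (\<Sum>i=1..n. 2 / real N)"
    unfolding l1_dist_def
  proof (intro sum_mono)
    fix i assume i: "i \<in> {1..n}"
    have "(\<Sum>j=1..k. \<bar>opt_path t i j - opt_path (Suc t) i j\<bar>)
        \<le> (\<Sum>j=1..k. (opt_vertex i j + v t i j) / real N)"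
    proof (intro sum_mono)
      fix j assume "j \<in> {1..k}"
      then have "\<bar>opt_vertex i j - v t i j\<bar> \<le> opt_vertex i j + v t i j"
        using direction_nonneg[OF assms i, of j] by (cases "j = opt i") (auto simp: opt_vertex_def)
      then show "\<bar>opt_path t i j - opt_path (Suc t) i j\<bar> \<le> (opt_vertex i j + v t i j) / real N"
        by (simp add: opt_path_Suc[OF assms] divide_right_mono)
    qed
    also have "\<dots> = 2 / real N"
      using opt_vertex_row_sum[OF i] direction_row_sum[OF assms i]
      by (simp add: sum.distrib flip: sum_divide_distrib)
    finally show "(\<Sum>j=1..k. \<bar>opt_path t i j - opt_path (Suc t) i j\<bar>) \<le> 2 / real N" .
  qed
  also have "\<dots> = 2 * (real n / real N)" by simp
  finally have "(l1_dist n k (opt_path (Suc t)) (opt_path t))^2 \<le> (2 * (real n / real N))^2"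
    by (intro power_mono) (auto simp: l1_dist_def intro: sum_nonneg)
  then have "(l1_dist n k (opt_path (Suc t)) (opt_path t))^2 \<le> 4 * (real n / real N)^2"
    by (simp add: power_mult_distrib power_divide)
  from mult_left_mono[OF this, of "4 * OPT n k f"]
  have err: "4 * OPT n k f * (l1_dist n k (opt_path (Suc t)) (opt_path t))^2
      \<le> 16 * OPT n k f * (real n / real N)^2"
    using OPT_nonneg by simp
  have row: "(\<Sum>j=1..k. (opt_path t i j - opt_path (Suc t) i j) * ?a i j)
      = (\<Sum>j=1..k. v t i j * (?a i (opt i) - ?a i j)) / real N" if i: "i \<in> {1..n}" for i
  proof -
    have "(\<Sum>j=1..k. (opt_path t i j - opt_path (Suc t) i j) * ?a i j)
        = ((\<Sum>j=1..k. opt_vertex i j * ?a i j) - (\<Sum>j=1..k. v t i j * ?a i j)) / real N"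
      using assms by (simp add: opt_path_Suc left_diff_distrib diff_divide_distrib sum_subtractf
          flip: sum_divide_distrib)
    also have "(\<Sum>j=1..k. opt_vertex i j * ?a i j) = (\<Sum>j=1..k. if j = opt i then ?a i j else 0)"
      by (intro sum.cong) (auto simp: opt_vertex_def)
    also have "\<dots> = (\<Sum>j=1..k. v t i j * ?a i (opt i))"
      using opt_range[OF i] direction_row_sum[OF assms i] by (simp flip: sum_distrib_right)
    finally show ?thesis by (simp add: sum_subtractf right_diff_distrib)
  qed
  have "(\<Sum>i=1..n. \<Sum>j=1..k. (opt_path t i j - opt_path (Suc t) i j) * ?a i j)
      = (\<Sum>i=1..n. (\<Sum>j=1..k. v t i j * (?a i (opt i) - ?a i j)) / real N)"
    by (rule sum.cong[OF refl]) (rule row)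
  also have "\<dots> = loss_rate t / real N"
    by (simp add: loss_rate_def sum_divide_distrib)
  finally have linear_part:
    "(\<Sum>i=1..n. \<Sum>j=1..k. (opt_path t i j - opt_path (Suc t) i j) * ?a i j) = loss_rate t / real N" .
  then show ?thesis
    using multilinear_ext_first_order[where f=f, OF opt_path_in_polytope opt_path_in_polytope
        abs_f_tuple_of_le_OPT[OF f_nonneg], of "Suc t" t] assms err
    unfolding abs_le_iff by simp
qed

text \<open>The c-condition is applied with \<open>a = \<nabla>F(opt_path (t+1))\<close>, which lies below
  \<open>\<nabla>F(s t)\<close> because \<open>s t \<le> opt_path (t+1)\<close> coordinatewise.\<close>

lemma loss_rate_le_gain_rate:
  assumes "t < N"
  shows "loss_rate t \<le> c * gain_rate t"
proof -
  have partial: "partial_ij F (s t) i j = marginal n k f (s t) i j"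
    if "i \<in> {1..n}" "j \<in> {1..k}" for i j
    using partial_ij_multilinear_ext[OF that] .
  have "0 \<le> marginal n k f (opt_path (Suc t)) i j \<and>
        marginal n k f (opt_path (Suc t)) i j \<le> partial_ij F (s t) i j"
    if i: "i \<in> {1..n}" and j: "j \<in> {1..k}" for i j
  proof
    show "0 \<le> marginal n k f (opt_path (Suc t)) i j"
      using marginal_nonneg[OF f_mono opt_path_in_polytope j] assms by simp
    have "s t i' j' \<le> opt_path (Suc t) i' j'" if "i' \<in> {1..n}" "j' \<in> {1..k}" for i' j'
      using assms that N_pos direction_nonneg
      by (simp add: opt_path_def opt_vertex_def traj_Suc)
    then show "marginal n k f (opt_path (Suc t)) i j \<le> partial_ij F (s t) i j"
      unfolding partial[OF i j] using assms
      by (intro marginal_antimono[OF f_submod i j traj_in_polytope opt_path_in_polytope]) auto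
  qed
  then have "loss_rate t \<le> c * (\<Sum>i=1..n. \<Sum>j=1..k. v t i j * partial_ij F (s t) i j)"
    using direction_c_condition[OF assms] opt_range unfolding c_condition_def loss_rate_def by blast
  also have "\<dots> = c * gain_rate t"
    by (simp add: gain_rate_def partial)
  finally show ?thesis .
qed

lemma potential_step:
  assumes "t < N"
  shows "F (opt_path t) - F (opt_path (Suc t))
      \<le> c * (F (s (Suc t)) - F (s t)) + (4 * c + 16) * OPT n k f * (real n / real N)^2"
proof -
  have "loss_rate t / real N \<le> c * (gain_rate t / real N)"
    using loss_rate_le_gain_rate[OF assms] N_pos by (simp add: divide_right_mono)
  also have "\<dots> \<le> c * (F (s (Suc t)) - F (s t) + 4 * OPT n k f * (real n / real N)^2)"
    using gain_step[OF assms] c_nonneg by (intro mult_left_mono) auto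
  finally show ?thesis
    using loss_step[OF assms] by (simp add: algebra_simps)
qed

lemma output_bound:
  "OPT n k f \<le> (c + 1) * F (s N) + (4 * c + 16) * OPT n k f * (real n)^2 / real N"
proof -
  let ?e = "(4 * c + 16) * OPT n k f * (real n / real N)^2"
  have "F (opt_path 0) - F (opt_path N) = (\<Sum>t<N. F (opt_path t) - F (opt_path (Suc t)))"
    by (rule sum_lessThan_telescope'[symmetric])
  also have "\<dots> \<le> (\<Sum>t<N. c * (F (s (Suc t)) - F (s t)) + ?e)"
    by (intro sum_mono potential_step) simp
  also have "\<dots> = c * (\<Sum>t<N. F (s (Suc t)) - F (s t)) + real N * ?e"
    by (simp add: sum.distrib sum_distrib_left)
  also have "\<dots> = c * (F (s N) - F (s 0)) + real N * ?e"
    by (simp only: sum_lessThan_telescope[where f="\<lambda>t. F (s t)"])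
  also have "\<dots> \<le> c * F (s N) + (4 * c + 16) * OPT n k f * (real n)^2 / real N"
    using c_nonneg multilinear_ext_nonneg[OF f_nonneg traj_in_polytope[of 0]] N_pos
    by (simp add: power_divide field_simps power2_eq_square)
  finally show ?thesis
    unfolding F_opt_path_0 F_opt_path_N by (simp add: algebra_simps)
qed

end

theorem mainTheorem5:
  fixes n k :: nat and f :: "(nat \<Rightarrow> nat set) \<Rightarrow> real" and c :: real
  assumes "k \<ge> 2"
    and "\<forall>S\<in>ktuples n k. f S \<ge> 0"
    and "k_monotone n k f"
    and "k_submodular n k f"
    and "c > 0"
  shows "\<forall>\<epsilon>>0. \<exists>N0::nat. \<forall>N\<ge>N0. \<forall>v :: nat \<Rightarrow> nat \<Rightarrow> nat \<Rightarrow> real.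
           (\<forall>t<N. valid_direction n k (v t) \<and>
              c_condition n k c (v t) (partial_ij (multilinear_ext n k f) (traj N v t))) \<longrightarrow>
           multilinear_ext n k f (traj N v N) \<ge> OPT n k f / (c + 1) - \<epsilon>"
proof (intro allI impI)
  fix \<epsilon> :: real assume "\<epsilon> > 0"
  obtain opt where opt: "\<forall>i\<in>{1..n}. opt i \<in> {1..k}" "f (tuple_of n k opt) = OPT n k f"
    using exists_optimal_full_labelling[OF assms(3)] assms(1) by auto
  define C where "C = (4 * c + 16) * OPT n k f * (real n)^2"
  show "\<exists>N0::nat. \<forall>N\<ge>N0. \<forall>v. (\<forall>t<N. valid_direction n k (v t) \<and>
          c_condition n k c (v t) (partial_ij (multilinear_ext n k f) (traj N v t))) \<longrightarrow>
        multilinear_ext n k f (traj N v N) \<ge> OPT n k f / (c + 1) - \<epsilon>"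
  proof (intro exI[of _ "nat \<lceil>C / \<epsilon>\<rceil> + 1"] allI impI)
    fix N v
    assume N: "nat \<lceil>C / \<epsilon>\<rceil> + 1 \<le> N"
      and run: "\<forall>t<N. valid_direction n k (v t) \<and>
          c_condition n k c (v t) (partial_ij (multilinear_ext n k f) (traj N v t))"
    interpret framework_run n k f c N v opt
      using assms(2-5) N run opt by unfold_locales auto
    have "C / \<epsilon> < real N"
      using N by linarith
    then have "C / real N \<le> \<epsilon>"
      using \<open>\<epsilon> > 0\<close> N_pos by (simp add: field_simps)
    then have "OPT n k f \<le> (c + 1) * F (s N) + \<epsilon>"
      using output_bound by (simp add: C_def)
    then have "OPT n k f / (c + 1) \<le> ((c + 1) * F (s N) + \<epsilon>) / (c + 1)"
      using assms(5) by (intro divide_right_mono) auto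
    also have "\<dots> = F (s N) + \<epsilon> / (c + 1)"
      using assms(5) by (simp add: add_divide_distrib)
    finally have "OPT n k f / (c + 1) \<le> F (s N) + \<epsilon> / (c + 1)" .
    moreover have "\<epsilon> / (c + 1) \<le> \<epsilon>"
      using \<open>\<epsilon> > 0\<close> assms(5) by (simp add: divide_le_eq)
    ultimately show "F (s N) \<ge> OPT n k f / (c + 1) - \<epsilon>" by linarith
  qed
qed

end
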